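(* There exist two-dimensional random vectors $\mathbf{X},\mathbf{Y}$ with $\mathbf{X}\succ_{\mathrm{FSD}}\mathbf{Y}$ and a function $u\in\mathcal{U}$ with $\frac{\partial^2u(x_1,x_2)}{\partial x_1\partial x_2}\le0$ such that $\mathbb{E}\,u(\mathbf{X})\le\mathbb{E}\,u(\mathbf{Y})$; i.e. strict first-order stochastic dominance does not in general imply strictly greater expected utility for all $u\in\mathcal{U}$ with nonpositive mixed partial derivative.
   Context: For $\mathbf{x},\mathbf{y}\in\mathbb{R}^2$: $\mathbf{y}\preceq_p\mathbf{x}$ iff $y_i\le x_i$ for all $i$; $\mathbf{x}\succ_p\mathbf{y}$ iff $x_i\ge y_i$ for all $i$ and $x_i>y_i$ for some $i$. $\mathcal{U}$ is the class of strictly monotonically increasing $u:\mathbb{R}^2\to\mathbb{R}$ ($\mathbf{x}\succ_p\mathbf{y}\implies u(\mathbf{x})>u(\mathbf{y})$). CDF: $F_{\mathbf{X}}(\mathbf{x})=P(\mathbf{X}\preceq_p\mathbf{x})$. $\mathbf{X}\succ_{\mathrm{FSD}}\mathbf{Y}$ iff $F_{\mathbf{X}}(\mathbf{v})\le F_{\mathbf{Y}}(\mathbf{v})$ for all $\mathbf{v}$ and strict inequality for some $\mathbf{v}$. *)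

theory Defs
  imports "HOL-Probability.Probability"
begin

definition pareto_le :: "real \<times> real \<Rightarrow> real \<times> real \<Rightarrow> bool" where
  "pareto_le y x \<longleftrightarrow> fst y \<le> fst x \<and> snd y \<le> snd x"

definition pareto_gt :: "real \<times> real \<Rightarrow> real \<times> real \<Rightarrow> bool" where
  "pareto_gt x y \<longleftrightarrow> (fst x \<ge> fst y \<and> snd x \<ge> snd y) \<and> (fst x > fst y \<or> snd x > snd y)"

definition strictly_increasing2 :: "(real \<times> real \<Rightarrow> real) \<Rightarrow> bool" where
  "strictly_increasing2 u \<longleftrightarrow> (\<forall>x y. pareto_gt x y \<longrightarrow> u x > u y)"

definition cdf2 :: "(real \<times> real) measure \<Rightarrow> real \<times> real \<Rightarrow> real" where
  "cdf2 P v = measure P {x. pareto_le x v}"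

definition fsd :: "(real \<times> real) measure \<Rightarrow> (real \<times> real) measure \<Rightarrow> bool" where
  "fsd PX PY \<longleftrightarrow> (\<forall>v. cdf2 PX v \<le> cdf2 PY v) \<and> (\<exists>v. cdf2 PX v < cdf2 PY v)"

text \<open>h is the mixed second partial derivative d^2 u / (dx1 dx2): first differentiate
  in x2 (giving g), then differentiate g in x1; both partials exist everywhere.\<close>
definition mixed_partial :: "(real \<times> real \<Rightarrow> real) \<Rightarrow> (real \<times> real \<Rightarrow> real) \<Rightarrow> bool" where
  "mixed_partial u h \<longleftrightarrow> (\<exists>g :: real \<Rightarrow> real \<Rightarrow> real.
      (\<forall>x1 x2. ((\<lambda>t. u (x1, t)) has_real_derivative g x1 x2) (at x2)) \<and>
      (\<forall>x1 x2. ((\<lambda>s. g s x2) has_real_derivative h (x1, x2)) (at x1)))"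

end

theory Submission
  imports Defs
begin

text \<open>Let X be uniform on the antidiagonal points (1,0), (0,1) and Y uniform on the diagonal
  points (0,0), (1,1). Both have the same Bernoulli marginals, but Y is more positively dependent,
  so its joint CDF (the probability of a lower orthant) is pointwise at least that of X, and
  strictly larger at (0,0). The additive utility u(x1, x2) = x1 + x2 is strictly increasing with
  vanishing mixed partial derivative, and its expectation depends only on the marginals, so
  E u(X) = E u(Y) = 1.\<close>

definition uniform_borel :: "'a::topological_space set \<Rightarrow> 'a measure" where
  "uniform_borel S = distr (measure_pmf (pmf_of_set S)) borel id"

lemma prob_space_uniform_borel: "prob_space (uniform_borel S)"
  unfolding uniform_borel_def
  by (rule prob_space.prob_space_distr) (simp_all add: measure_pmf.prob_space_axioms)

lemma sets_uniform_borel [simp]: "sets (uniform_borel S) = sets borel"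
  by (simp add: uniform_borel_def)

lemma measure_uniform_borel:
  assumes "finite S" "S \<noteq> {}" "A \<in> sets borel"
  shows "measure (uniform_borel S) A = card (S \<inter> A) / card S"
  using assms by (simp add: uniform_borel_def measure_distr measure_pmf_of_set)

lemma integral_uniform_borel:
  fixes f :: "'a::topological_space \<Rightarrow> real"
  assumes "finite S" "S \<noteq> {}" "f \<in> borel_measurable borel"
  shows "integrable (uniform_borel S) f"
    and "(\<integral>x. f x \<partial>uniform_borel S) = (\<Sum>x\<in>S. f x) / card S"
  using assms
  by (simp_all add: uniform_borel_def integrable_distr_eq integral_distr
      integrable_measure_pmf_finite integral_pmf_of_set)

lemma closed_pareto_lower_set: "closed {x. pareto_le x v}"
  unfolding pareto_le_def
  by (intro closed_Collect_conj closed_Collect_le continuous_intros)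

lemma cdf2_uniform_borel:
  assumes "finite S" "S \<noteq> {}"
  shows "cdf2 (uniform_borel S) v = (\<Sum>x\<in>S. of_bool (pareto_le x v)) / card S"
  using assms closed_pareto_lower_set
  by (simp add: cdf2_def measure_uniform_borel borel_closed)

lemma fsd_antidiagonal_diagonal:
  "fsd (uniform_borel {(1, 0), (0, 1)}) (uniform_borel {(0, 0), (1, 1)})"
  unfolding fsd_def
  by (intro conjI exI[of _ "(0, 0)"])
    (auto simp del: sum_of_bool_eq simp: cdf2_uniform_borel pareto_le_def)

lemma strictly_increasing2_sum: "strictly_increasing2 (\<lambda>x. fst x + snd x)"
  unfolding strictly_increasing2_def pareto_gt_def by auto

lemma mixed_partial_sum: "mixed_partial (\<lambda>x. fst x + snd x) (\<lambda>_. 0)"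
  unfolding mixed_partial_def
  by (rule exI[of _ "\<lambda>_ _. 1"]) (auto intro!: derivative_eq_intros)

theorem mainTheorem11:
  shows "\<exists>(PX :: (real \<times> real) measure) (PY :: (real \<times> real) measure) (u :: real \<times> real \<Rightarrow> real).
     prob_space PX \<and> sets PX = sets borel \<and>
     prob_space PY \<and> sets PY = sets borel \<and>
     fsd PX PY \<and>
     strictly_increasing2 u \<and>
     (\<exists>h. mixed_partial u h \<and> (\<forall>x. h x \<le> 0)) \<and>
     integrable PX u \<and> integrable PY u \<and>
     (\<integral>x. u x \<partial>PX) \<le> (\<integral>x. u x \<partial>PY)"
proof -
  let ?u = "\<lambda>x::real \<times> real. fst x + snd x"
  have u_measurable: "?u \<in> borel_measurable borel"
    by (intro borel_measurable_continuous_onI continuous_intros)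
  note integral_X = integral_uniform_borel[of "{(1, 0), (0, 1)}", OF _ _ u_measurable]
  note integral_Y = integral_uniform_borel[of "{(0, 0), (1, 1)}", OF _ _ u_measurable]
  show ?thesis
    using prob_space_uniform_borel fsd_antidiagonal_diagonal strictly_increasing2_sum
      mixed_partial_sum integral_X integral_Y
    by (intro exI[of _ "uniform_borel {(1, 0), (0, 1)}"] exI[of _ "uniform_borel {(0, 0), (1, 1)}"]
        exI[of _ ?u]) auto
qed

end
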